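(* For all integers $n,d,h,k\ge0$ with $(n,k,h,d)\ne(0,0,1,1)$, \[ p_n^{(\mathrm{pk},\mathrm{dp},\mathrm{des})}(k,h,d)+p_n^{(\mathrm{pk},\mathrm{dp},\mathrm{des})}(k,h-1,d-1)=\sum_{i,j}\binom{n}{2i+h}\, b_{2i+h}^{(\mathrm{pk},\mathrm{des})}(j,i)\, b_{n-2i-h}^{(\mathrm{pk},\mathrm{des})}(k-j,\,d-i-h), \] the sum over all integers $i,j$. Equivalently, as formal power series, \[ B^{(\mathrm{pk},\mathrm{des})}\Big(xzt,\,y,\,\tfrac{1}{z^2t}\Big)\,B^{(\mathrm{pk},\mathrm{des})}(x,y,t)=(1+zt)\,P^{(\mathrm{pk},\mathrm{dp},\mathrm{des})}(x,y,z,t)-zt. \]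
   Context: For a permutation (or word of distinct integers) $\pi=\pi_1\cdots\pi_n$, $\operatorname{des}(\pi)$ is the number of $1\le i\le n-1$ with $\pi_i>\pi_{i+1}$, $\operatorname{asc}(\pi)$ the number with $\pi_i<\pi_{i+1}$, and $\operatorname{pk}(\pi)$ the number of $2\le i\le n-1$ with $\pi_{i-1}<\pi_i>\pi_{i+1}$. Let $h(\pi)=\operatorname{asc}(\pi)-\operatorname{des}(\pi)$ and $\operatorname{dp}(\pi)=-\min\{h(\pi_1\cdots\pi_i):1\le i\le n\}$ (the depth), with $\operatorname{dp}(\epsilon)=0$ for the empty permutation. A ballot permutation is one with $h(\pi_1\cdots\pi_i)\ge0$ for all $i$; $\mathscr B_n$ is the set of ballot permutations of $[n]$, $\mathscr B_0=\mathcal S_0=\{\epsilon\}$ (all statistics of $\epsilon$ are $0$). Define $p_n^{(\mathrm{pk},\mathrm{dp},\mathrm{des})}(k,h,d)=|\{\pi\in\mathcal S_n:\operatorname{pk}(\pi)=k,\operatorname{dp}(\pi)=h,\operatorname{des}(\pi)=d\}|$ and $b_n^{(\mathrm{pk},\mathrm{des})}(k,d)=|\{\pi\in\mathscr B_n:\operatorname{pk}(\pi)=k,\operatorname{des}(\pi)=d\}|$, both $0$ if any argument is negative; $\binom{n}{m}=0$ unless $0\le m\le n$. Generating functions: $P^{(\mathrm{pk},\mathrm{dp},\mathrm{des})}(x,y,z,t)=\sum_{n\ge0}\sum_{\pi\in\mathcal S_n}y^{\operatorname{pk}(\pi)}z^{\operatorname{dp}(\pi)}t^{\operatorname{des}(\pi)}\frac{x^n}{n!}$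 and $B^{(\mathrm{pk},\mathrm{des})}(x,y,t)=\sum_{n\ge0}\sum_{\pi\in\mathscr B_n}y^{\operatorname{pk}(\pi)}t^{\operatorname{des}(\pi)}\frac{x^n}{n!}$. *)

theory Defs
  imports Main
begin

definition perms :: "nat \<Rightarrow> nat list set" where
  "perms n = {xs. distinct xs \<and> set xs = {1..n}}"

definition des :: "nat list \<Rightarrow> nat" where
  "des xs = card {i. Suc i < length xs \<and> xs ! i > xs ! Suc i}"

definition asc :: "nat list \<Rightarrow> nat" where
  "asc xs = card {i. Suc i < length xs \<and> xs ! i < xs ! Suc i}"

text \<open>Peaks at 1-based positions 2..n-1, i.e. 0-based positions 1..n-2.\<close>
definition pk :: "nat list \<Rightarrow> nat" where
  "pk xs = card {i. 0 < i \<and> Suc i < length xs \<and> xs ! (i - 1) < xs ! i \<and> xs ! i > xs ! Suc i}"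

definition hgt :: "nat list \<Rightarrow> int" where
  "hgt xs = int (asc xs) - int (des xs)"

definition dp :: "nat list \<Rightarrow> int" where
  "dp xs = (if xs = [] then 0 else - Min ((\<lambda>i. hgt (take i xs)) ` {1..length xs}))"

definition ballot :: "nat list \<Rightarrow> bool" where
  "ballot xs = (\<forall>i\<in>{1..length xs}. hgt (take i xs) \<ge> 0)"

definition ballot_perms :: "nat \<Rightarrow> nat list set" where
  "ballot_perms n = {xs \<in> perms n. ballot xs}"

text \<open>Counting functions; integer arguments, automatically 0 if an argument is negative.\<close>
definition p_pk_dp_des :: "nat \<Rightarrow> int \<Rightarrow> int \<Rightarrow> int \<Rightarrow> nat" where
  "p_pk_dp_des n k h d =
     card {xs \<in> perms n. int (pk xs) = k \<and> dp xs = h \<and> int (des xs) = d}"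

definition b_pk_des :: "nat \<Rightarrow> int \<Rightarrow> int \<Rightarrow> nat" where
  "b_pk_des n k d = card {xs \<in> ballot_perms n. int (pk xs) = k \<and> int (des xs) = d}"

definition binom_int :: "int \<Rightarrow> int \<Rightarrow> nat" where
  "binom_int n m = (if 0 \<le> m \<and> m \<le> n then nat n choose nat m else 0)"

end

theory Submission
  imports Defs "HOL-Combinatorics.Multiset_Permutations"
begin

text \<open>
  Read a permutation as the lattice walk given by its up-down word: \<open>des\<close>, \<open>asc\<close> and
  \<open>pk\<close> count down-steps, up-steps and up-down corners, \<open>hgt\<close> is the endpoint, \<open>dp\<close>
  is minus the minimum and ballot means the walk never goes below 0.
  Send a pair \<open>(s1, s2)\<close> of ballot words on complementary value sets, with
  \<open>length s1 = 2 * des s1 + h\<close>, to \<open>rev s1 @ s2\<close>. The walk of \<open>rev s1\<close> is that of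
  \<open>s1\<close> reversed and negated, so it ends at its minimum \<open>1 - h\<close>. If the step into \<open>s2\<close>
  goes down, the result has depth \<open>h\<close> and \<open>d\<close> descents, and the cut sits just before the
  first visit to the minimum; otherwise it has depth \<open>h - 1\<close> and \<open>d - 1\<close> descents, and
  the cut sits at the last visit to the minimum. Cutting there inverts the map, and the only
  permutation never reached is the empty one, whence the exception \<open>(0, 0, 1, 1)\<close>.
  Counting the pairs by the value set, the descents and the peaks of \<open>s1\<close> gives the sum.
\<close>

section \<open>Up-down words\<close>

fun steps :: "nat list \<Rightarrow> int list" where
  "steps (x # y # xs) = sgn (int y - int x) # steps (y # xs)"
| "steps _ = []"

lemma card_adjacent_Cons2:
  fixes R :: "'a \<Rightarrow> 'a \<Rightarrow> bool"
  shows "card {i. Suc i < length (x # y # xs) \<and> R ((x # y # xs) ! i) ((x # y # xs) ! Suc i)}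
    = of_bool (R x y) + card {i. Suc i < length (y # xs) \<and> R ((y # xs) ! i) ((y # xs) ! Suc i)}"
proof -
  let ?B = "{i. Suc i < length (y # xs) \<and> R ((y # xs) ! i) ((y # xs) ! Suc i)}"
  have "{i. Suc i < length (x # y # xs) \<and> R ((x # y # xs) ! i) ((x # y # xs) ! Suc i)}
      = (if R x y then {0} else {}) \<union> Suc ` ?B"
  proof (rule set_eqI)
    fix i
    show "i \<in> {i. Suc i < length (x # y # xs) \<and> R ((x # y # xs) ! i) ((x # y # xs) ! Suc i)}
      \<longleftrightarrow> i \<in> (if R x y then {0} else {}) \<union> Suc ` ?B"
      by (cases i) auto
  qed
  moreover have "finite ?B"
    by (rule finite_subset[of _ "{..<length (y # xs)}"]) auto
  ultimately show ?thesis
    by (simp add: card_image)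
qed

lemma des_Cons2: "des (x # y # xs) = of_bool (y < x) + des (y # xs)"
  unfolding des_def by (rule card_adjacent_Cons2)

lemma asc_Cons2: "asc (x # y # xs) = of_bool (x < y) + asc (y # xs)"
  unfolding asc_def by (rule card_adjacent_Cons2)

lemma des_eq_count_steps: "des xs = count_list (steps xs) (-1)"
  by (induction xs rule: steps.induct) (simp_all add: des_Cons2 sgn_if, simp_all add: des_def)

lemma asc_eq_count_steps: "asc xs = count_list (steps xs) 1"
  by (induction xs rule: steps.induct) (simp_all add: asc_Cons2 sgn_if, simp_all add: asc_def)

lemma hgt_eq_sum_steps: "hgt xs = sum_list (steps xs)"
  by (induction xs rule: steps.induct)
    (auto simp: hgt_def asc_eq_count_steps des_eq_count_steps sgn_if)

lemma pk_Cons3: "pk (x # y # z # xs) = of_bool (x < y \<and> z < y) + pk (y # z # xs)"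
proof -
  let ?P = "\<lambda>ws i. 0 < i \<and> Suc i < length ws \<and> ws ! (i - 1) < ws ! i \<and> ws ! Suc i < ws ! i"
  let ?B = "{i. ?P (y # z # xs) i}"
  have "{i. ?P (x # y # z # xs) i} = (if x < y \<and> z < y then {1} else {}) \<union> Suc ` ?B"
  proof (rule set_eqI)
    fix i
    show "i \<in> {i. ?P (x # y # z # xs) i} \<longleftrightarrow> i \<in> (if x < y \<and> z < y then {1} else {}) \<union> Suc ` ?B"
      by (cases i; cases "i - 1") (auto simp: image_iff)
  qed
  moreover have "finite ?B"
    by (rule finite_subset[of _ "{..<length (y # z # xs)}"]) auto
  moreover have "1 \<notin> Suc ` ?B"
    by auto
  ultimately show ?thesis
    unfolding pk_def by (simp add: card_image)
qed

lemma pk_short: "length xs < 3 \<Longrightarrow> pk xs = 0"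
  unfolding pk_def by (rule card_eq_0_iff[THEN iffD2]) auto

fun peaks :: "int list \<Rightarrow> nat" where
  "peaks (a # b # s) = of_bool (a = 1 \<and> b = -1) + peaks (b # s)"
| "peaks _ = 0"

lemma pk_eq_peaks_steps: "pk xs = peaks (steps xs)"
proof (induction xs rule: steps.induct)
  case (1 x y xs)
  show ?case
  proof (cases xs)
    case Nil
    then show ?thesis
      by (simp add: pk_short)
  next
    case (Cons z zs)
    then show ?thesis
      using "1.IH" by (auto simp: pk_Cons3 sgn_if)
  qed
qed (simp_all add: pk_short)

lemma length_steps: "length (steps xs) = length xs - 1"
  by (induction xs rule: steps.induct) auto

lemma steps_take: "steps (take (Suc l) xs) = take l (steps xs)"
proof (induction xs arbitrary: l rule: steps.induct)
  case (1 x y xs)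
  then show ?case
    by (cases l) auto
qed auto

lemma steps_append:
  "xs \<noteq> [] \<Longrightarrow> ys \<noteq> [] \<Longrightarrow>
    steps (xs @ ys) = steps xs @ sgn (int (hd ys) - int (last xs)) # steps ys"
proof (induction xs rule: steps.induct)
  case ("2_2" v)
  then show ?case
    by (cases ys) auto
qed auto

lemma steps_rev: "steps (rev xs) = rev (map uminus (steps xs))"
proof (induction xs rule: steps.induct)
  case (1 x y xs)
  have "steps (rev (x # y # xs)) = steps (rev (y # xs) @ [x])"
    by simp
  also have "\<dots> = steps (rev (y # xs)) @ [sgn (int x - int y)]"
    using steps_append[of "rev (y # xs)" "[x]"] by (simp add: last_rev del: rev.simps)
  also have "\<dots> = rev (map uminus (steps (x # y # xs)))"
    using 1 by (simp add: sgn_if)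
  finally show ?case .
qed auto

lemma steps_rev_append:
  assumes "s1 \<noteq> []"
  shows "steps (rev s1 @ s2) = rev (map uminus (steps s1)) @
    (if s2 = [] then [] else sgn (int (hd s2) - int (hd s1)) # steps s2)"
  using assms steps_append[of "rev s1" s2] by (simp add: steps_rev last_rev)

lemma steps_distinct: "distinct xs \<Longrightarrow> set (steps xs) \<subseteq> {-1, 1}"
  by (induction xs rule: steps.induct) (auto simp: sgn_if)

lemma length_eq_asc_des:
  assumes "distinct xs" "xs \<noteq> []"
  shows "length xs = asc xs + des xs + 1"
proof -
  have "length (steps xs) = (\<Sum>c\<in>{-1, 1}. count_list (steps xs) c)"
    using sum_count_set[OF steps_distinct[OF assms(1)]] by simp
  then show ?thesis
    using assms(2) by (cases xs) (simp_all add: length_steps asc_eq_count_steps des_eq_count_steps)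
qed

lemma steps_map_strict_mono:
  assumes "strict_mono_on S f" "set xs \<subseteq> S"
  shows "steps (map f xs) = steps xs"
  using assms(2)
proof (induction xs rule: steps.induct)
  case (1 x y xs)
  then have "sgn (int (f y) - int (f x)) = sgn (int y - int x)"
    using strict_mono_onD[OF assms(1), of x y] strict_mono_onD[OF assms(1), of y x]
    by (cases x y rule: linorder_cases) (auto simp: sgn_if)
  with 1 show ?case
    by simp
qed auto

lemma peaks_Cons: "peaks (a # s) = of_bool (s \<noteq> [] \<and> a = 1 \<and> hd s = -1) + peaks s"
  by (cases s) auto

lemma peaks_append:
  "peaks (u @ c # v) = peaks u + peaks v + of_bool (u \<noteq> [] \<and> last u = 1 \<and> c = -1)
    + of_bool (v \<noteq> [] \<and> c = 1 \<and> hd v = -1)"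
proof (induction u)
  case (Cons a u)
  then show ?case
    by (cases u) (auto simp: peaks_Cons)
qed (simp add: peaks_Cons)

lemma peaks_rev_uminus: "peaks (rev (map uminus s)) = peaks s"
proof (induction s)
  case (Cons a s)
  then show ?case
    using peaks_append[of "rev (map uminus s)" "-a" "[]"] peaks_Cons[of a s]
    by (cases s) (auto simp: last_rev)
qed auto

lemma count_list_rev_uminus: "count_list (rev (map uminus s)) (- c) = count_list s (c :: int)"
  using count_list_map_conv[of uminus s c] by (simp add: inj_def)

section \<open>Minimal prefix sums\<close>

fun min_prefix_sum :: "int list \<Rightarrow> int" where
  "min_prefix_sum [] = 0"
| "min_prefix_sum (a # s) = min 0 (a + min_prefix_sum s)"

lemma min_prefix_sum_nonpos: "min_prefix_sum s \<le> 0"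
  by (cases s) auto

lemma min_prefix_sum_le_sum_take: "min_prefix_sum s \<le> sum_list (take l s)"
proof (induction s arbitrary: l)
  case (Cons a s)
  then show ?case
    by (cases l) (auto simp: min_le_iff_disj)
qed auto

lemma min_prefix_sum_le_sum_prefix: "min_prefix_sum (u @ v) \<le> sum_list u"
  using min_prefix_sum_le_sum_take[of "u @ v" "length u"] by simp

lemma min_prefix_sum_attained: "\<exists>l \<le> length s. min_prefix_sum s = sum_list (take l s)"
proof (induction s)
  case (Cons a s)
  then obtain l where "l \<le> length s" "min_prefix_sum s = sum_list (take l s)"
    by auto
  then show ?case
    by (cases "a + min_prefix_sum s \<le> 0") (auto intro: exI[of _ "Suc l"] exI[of _ 0])
qed auto

lemma Min_sum_take_eq_min_prefix_sum:
  "Min ((\<lambda>l. sum_list (take l s)) ` {..length s}) = min_prefix_sum s"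
proof (rule Min_eqI)
  show "min_prefix_sum s \<in> (\<lambda>l. sum_list (take l s)) ` {..length s}"
    using min_prefix_sum_attained[of s] by auto
qed (auto simp: min_prefix_sum_le_sum_take)

lemma min_prefix_sum_append:
  "min_prefix_sum (u @ v) = min (min_prefix_sum u) (sum_list u + min_prefix_sum v)"
proof (induction u)
  case Nil
  then show ?case
    using min_prefix_sum_nonpos[of v] by (simp add: min_absorb2)
qed (simp add: min_def)

lemma sum_list_map_uminus: "sum_list (map uminus s) = - sum_list (s :: int list)"
  by (induction s) auto

lemma min_prefix_sum_rev_uminus:
  "min_prefix_sum (rev (map uminus s)) = min_prefix_sum s - sum_list s"
proof (induction s)
  case (Cons a s)
  then show ?case
    using min_prefix_sum_nonpos[of s]
    by (auto simp: min_prefix_sum_append sum_list_map_uminus min_def)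
qed auto

lemma min_prefix_sum_eq_0_hd_nonneg: "min_prefix_sum s = 0 \<Longrightarrow> s \<noteq> [] \<Longrightarrow> 0 \<le> hd s"
  using min_prefix_sum_nonpos[of "tl s"] by (cases s) (auto simp: min_def split: if_splits)

lemma hgt_take_image:
  assumes "xs \<noteq> []"
  shows "(\<lambda>i. hgt (take i xs)) ` {1..length xs}
    = (\<lambda>l. sum_list (take l (steps xs))) ` {..length (steps xs)}"
proof -
  have "{1..length xs} = Suc ` {..length (steps xs)}"
    using assms by (simp add: image_Suc_atMost length_steps)
  then show ?thesis
    by (simp add: image_image hgt_eq_sum_steps steps_take)
qed

lemma dp_eq_min_prefix_sum: "dp xs = - min_prefix_sum (steps xs)"
proof (cases "xs = []")
  case False
  then show ?thesis
    unfolding dp_def hgt_take_image[OF False] Min_sum_take_eq_min_prefix_sum by simp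
qed (simp add: dp_def)

lemma ballot_iff_min_prefix_sum: "ballot xs \<longleftrightarrow> min_prefix_sum (steps xs) = 0"
proof (cases "xs = []")
  case False
  have "ballot xs \<longleftrightarrow> 0 \<le> Min ((\<lambda>i. hgt (take i xs)) ` {1..length xs})"
    using False by (subst Min_ge_iff) (auto simp: ballot_def Suc_le_eq)
  then show ?thesis
    unfolding hgt_take_image[OF False] Min_sum_take_eq_min_prefix_sum
    using min_prefix_sum_nonpos[of "steps xs"] by linarith
qed (simp add: ballot_def)

lemma ballot_iff_dp: "ballot xs \<longleftrightarrow> dp xs = 0"
  by (simp add: ballot_iff_min_prefix_sum dp_eq_min_prefix_sum)

lemma hgt_nonneg_if_ballot: "ballot xs \<Longrightarrow> 0 \<le> hgt xs"
  using min_prefix_sum_le_sum_take[of "steps xs" "length (steps xs)"]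
  by (simp add: ballot_iff_min_prefix_sum hgt_eq_sum_steps)

lemma ballot_rev_iff: "ballot (rev xs) \<longleftrightarrow> min_prefix_sum (steps xs) = sum_list (steps xs)"
  by (simp add: ballot_iff_min_prefix_sum steps_rev min_prefix_sum_rev_uminus)

section \<open>First and last visits to the minimum\<close>

lemma first_hit:
  assumes "set s \<subseteq> {-1, 1}" "min_prefix_sum s < 0"
  shows "\<exists>u v. s = u @ (-1) # v \<and> min_prefix_sum u = sum_list u
    \<and> sum_list u = min_prefix_sum s + 1 \<and> min_prefix_sum v = 0"
  using assms
proof (induction s)
  case (Cons a s)
  have a: "a = -1 \<or> a = 1" and min_s: "min_prefix_sum (a # s) = a + min_prefix_sum s"
    using Cons.prems by (auto simp: min_def split: if_splits)
  show ?case
  proof (cases "min_prefix_sum s = 0")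
    case True
    then show ?thesis
      using a min_s Cons.prems(2) by (intro exI[of _ "[]"] exI[of _ s]) auto
  next
    case False
    then obtain u v where "s = u @ (-1) # v" "min_prefix_sum u = sum_list u"
      "sum_list u = min_prefix_sum s + 1" "min_prefix_sum v = 0"
      using Cons min_prefix_sum_nonpos[of s] by fastforce
    then show ?thesis
      using a min_s Cons.prems(2) by (intro exI[of _ "a # u"] exI[of _ v]) auto
  qed
qed simp

lemma first_hit_unique:
  assumes "u @ (-1) # v = u' @ (-1) # v'"
    and "min_prefix_sum u = sum_list u" "min_prefix_sum u' = sum_list u'"
    and "sum_list u = sum_list u'"
  shows "u = u'"
proof -
  have extension_empty: "us = []" if "u1 = u2 @ us" "us @ (-1) # v1 = (-1) # v2"
    "min_prefix_sum u1 = sum_list u1" "sum_list u1 = sum_list u2" for u1 u2 us v1 v2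
  proof (rule ccontr)
    assume "us \<noteq> []"
    with that(2) obtain us' where "us = (-1) # us'"
      by (cases us) auto
    then have "min_prefix_sum u1 \<le> sum_list u2 - 1"
      using that(1) min_prefix_sum_le_sum_prefix[of "u2 @ [-1]" us'] by simp
    then show False
      using that(3,4) by simp
  qed
  obtain us where "u = u' @ us \<and> us @ (-1) # v = (-1) # v'
      \<or> u @ us = u' \<and> (-1) # v = us @ (-1) # v'"
    using append_eq_append_conv2[THEN iffD1, OF assms(1)] by blast
  then show ?thesis
  proof
    assume split: "u = u' @ us \<and> us @ (-1) # v = (-1) # v'"
    then have "us = []"
      using extension_empty[OF _ _ assms(2,4)] by blast
    with split show ?thesis
      by simp
  next
    assume split: "u @ us = u' \<and> (-1) # v = us @ (-1) # v'"
    then have "us = []"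
      using extension_empty[OF _ _ assms(3) assms(4)[symmetric]] by (metis split)
    with split show ?thesis
      by simp
  qed
qed

text \<open>The shape of a walk after its last visit to its minimum.\<close>

definition stays_above_start :: "int list \<Rightarrow> bool" where
  "stays_above_start v \<longleftrightarrow> v = [] \<or> (hd v = 1 \<and> min_prefix_sum (tl v) = 0)"

lemma stays_above_start_prefix:
  assumes "stays_above_start (w @ z)" "w \<noteq> []"
  shows "0 < sum_list w"
proof -
  obtain w' where "w = 1 # w'" "min_prefix_sum (w' @ z) = 0"
    using assms by (cases w) (auto simp: stays_above_start_def)
  then show ?thesis
    using min_prefix_sum_le_sum_prefix[of w' z] by simp
qed

lemma last_hit:
  assumes "set s \<subseteq> {-1, 1}"
  shows "\<exists>u v. s = u @ v \<and> min_prefix_sum u = sum_list u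
    \<and> sum_list u = min_prefix_sum s \<and> stays_above_start v"
  using assms
proof (induction s)
  case (Cons a s)
  then obtain u v where uv: "s = u @ v" "min_prefix_sum u = sum_list u"
    "sum_list u = min_prefix_sum s" "stays_above_start v"
    by auto
  show ?case
  proof (cases "a + min_prefix_sum s \<le> 0")
    case True
    then show ?thesis
      using uv by (intro exI[of _ "a # u"] exI[of _ v]) auto
  next
    case False
    then have "a = 1" "min_prefix_sum s = 0"
      using Cons.prems min_prefix_sum_nonpos[of s] by auto
    then show ?thesis
      by (intro exI[of _ "[]"] exI[of _ "a # s"]) (auto simp: stays_above_start_def)
  qed
qed (auto simp: stays_above_start_def)

lemma last_hit_unique:
  assumes "u @ v = u' @ v'" "sum_list u = sum_list u'"
    and "stays_above_start v" "stays_above_start v'"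
  shows "u = u'"
proof -
  have extension_empty: "us = []" if "u1 = u2 @ us" "us @ v1 = v2" "stays_above_start v2"
    "sum_list u1 = sum_list u2" for u1 u2 us v1 v2
    using that stays_above_start_prefix[of us v1] by auto
  obtain us where "u = u' @ us \<and> us @ v = v' \<or> u @ us = u' \<and> v = us @ v'"
    using append_eq_append_conv2[THEN iffD1, OF assms(1)] by blast
  then show ?thesis
  proof
    assume split: "u = u' @ us \<and> us @ v = v'"
    then have "us = []"
      using extension_empty[OF _ _ assms(4) assms(2)] by blast
    with split show ?thesis
      by simp
  next
    assume split: "u @ us = u' \<and> v = us @ v'"
    then have "us = []"
      using extension_empty[OF _ _ assms(3) assms(2)[symmetric]] by (metis split)
    with split show ?thesis
      by simp
  qed
qed

lemma steps_split:
  assumes "steps p = u @ w" "p \<noteq> []"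
  obtains a b where "p = a @ b" "a \<noteq> []" "steps a = u"
    and "b = [] \<Longrightarrow> w = []" "b \<noteq> [] \<Longrightarrow> w = sgn (int (hd b) - int (last a)) # steps b"
proof
  let ?a = "take (Suc (length u)) p" and ?b = "drop (Suc (length u)) p"
  show "p = ?a @ ?b" "?a \<noteq> []"
    using assms(2) by simp_all
  show "steps ?a = u"
    using assms(1) by (simp add: steps_take)
  have "length u + length w = length p - 1"
    using assms(1) length_steps[of p] by (metis length_append)
  then have "length p = Suc (length u + length w)"
    using assms(2) by (cases p) auto
  then show "?b = [] \<Longrightarrow> w = []"
    by simp
  show "w = sgn (int (hd ?b) - int (last ?a)) # steps ?b" if "?b \<noteq> []"
    using steps_append[OF \<open>?a \<noteq> []\<close> that] assms(1) \<open>steps ?a = u\<close> by simp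
qed

section \<open>The bijection\<close>

lemma stats_rev_append:
  assumes "s1 \<noteq> []" "ballot s1" "ballot s2" "distinct (s1 @ s2)"
  defines "desc_join \<equiv> s2 \<noteq> [] \<and> hd s2 < hd s1"
  shows "pk (rev s1 @ s2) = pk s1 + pk s2"
    and "dp (rev s1 @ s2) = hgt s1 + of_bool desc_join"
    and "des (rev s1 @ s2) = asc s1 + des s2 + of_bool desc_join"
proof -
  let ?u = "steps s1" and ?v = "steps s2" and ?c = "sgn (int (hd s2) - int (hd s1))"
  have min_u: "min_prefix_sum ?u = 0" and min_v: "min_prefix_sum ?v = 0"
    using assms(2,3) by (simp_all add: ballot_iff_min_prefix_sum)
  have join_step: "?c = (if desc_join then -1 else 1)" if "s2 \<noteq> []"
    using assms(1,4) that by (cases s1; cases s2) (auto simp: desc_join_def sgn_if)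
  have "?u \<noteq> [] \<Longrightarrow> hd ?u \<noteq> -1" and hd_v: "?v \<noteq> [] \<Longrightarrow> hd ?v \<noteq> -1"
    using min_prefix_sum_eq_0_hd_nonneg min_u min_v by force+
  then have last_u: "rev (map uminus ?u) \<noteq> [] \<Longrightarrow> last (rev (map uminus ?u)) \<noteq> 1"
    by (cases ?u) (auto simp: last_rev)
  have min_R: "min_prefix_sum (rev (map uminus ?u)) = - sum_list ?u"
    using min_prefix_sum_rev_uminus[of ?u] min_u by simp
  show "pk (rev s1 @ s2) = pk s1 + pk s2"
    and "dp (rev s1 @ s2) = hgt s1 + of_bool desc_join"
    and "des (rev s1 @ s2) = asc s1 + des s2 + of_bool desc_join"
    using join_step hd_v last_u min_R min_v
    by (auto simp: steps_rev_append[OF assms(1)] pk_eq_peaks_steps peaks_append peaks_rev_uminus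
        dp_eq_min_prefix_sum min_prefix_sum_append sum_list_map_uminus hgt_eq_sum_steps
        des_eq_count_steps asc_eq_count_steps count_list_rev_uminus[of _ 1, simplified] desc_join_def)
qed

definition ballot_pairs :: "nat \<Rightarrow> nat \<Rightarrow> nat \<Rightarrow> nat \<Rightarrow> (nat list \<times> nat list) set" where
  "ballot_pairs n k h d = {(s1, s2). distinct (s1 @ s2) \<and> set (s1 @ s2) = {1..n}
    \<and> ballot s1 \<and> ballot s2 \<and> length s1 = 2 * des s1 + h
    \<and> pk s1 + pk s2 = k \<and> des s1 + h + des s2 = d}"

definition perms_pk_dp_des :: "nat \<Rightarrow> int \<Rightarrow> int \<Rightarrow> int \<Rightarrow> nat list set" where
  "perms_pk_dp_des n k h d = {xs \<in> perms n. int (pk xs) = k \<and> dp xs = h \<and> int (des xs) = d}"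

lemma perms_eq_permutations_of_set: "perms n = permutations_of_set {1..n}"
  by (auto simp: perms_def permutations_of_set_def)

lemma finite_perms: "finite (perms n)"
  by (simp add: perms_eq_permutations_of_set)

lemma perms_pk_dp_des_distinct: "p \<in> perms_pk_dp_des n k h d \<Longrightarrow> distinct p"
  by (simp add: perms_pk_dp_des_def perms_def)

lemma ballot_pairs_hgt:
  assumes "(s1, s2) \<in> ballot_pairs n k h d" "s1 \<noteq> []"
  shows "hgt s1 = int h - 1"
  using assms length_eq_asc_des[of s1] by (auto simp: ballot_pairs_def hgt_def)

lemma ballot_pairs_fst_Nil_iff:
  assumes "(s1, s2) \<in> ballot_pairs n k h d"
  shows "s1 = [] \<longleftrightarrow> h = 0"
  using assms ballot_pairs_hgt[OF assms] hgt_nonneg_if_ballot[of s1]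
  by (cases s1) (auto simp: ballot_pairs_def des_def)

lemma Nil_mem_ballot_pairs_iff:
  "([], s2) \<in> ballot_pairs n k h d \<longleftrightarrow> h = 0 \<and> s2 \<in> perms_pk_dp_des n k 0 d"
  using ballot_iff_dp[of s2] by (auto simp: ballot_pairs_def perms_pk_dp_des_def perms_def
      ballot_def des_def pk_short)

lemma mem_ballot_pairs_iff:
  assumes "s1 \<noteq> []" "ballot s1" "ballot s2"
  defines "desc_join \<equiv> s2 \<noteq> [] \<and> hd s2 < hd s1"
  shows "(s1, s2) \<in> ballot_pairs n k h d
    \<longleftrightarrow> rev s1 @ s2
      \<in> perms_pk_dp_des n k (int h - 1 + of_bool desc_join) (int d - 1 + of_bool desc_join)"
proof (cases "distinct (s1 @ s2)")
  case True
  then show ?thesis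
    using stats_rev_append[OF assms(1-3) True] length_eq_asc_des[of s1] assms(1-3)
    by (auto simp: ballot_pairs_def perms_pk_dp_des_def perms_def hgt_def desc_join_def)
qed (auto simp: ballot_pairs_def perms_pk_dp_des_def perms_def)

lemma rev_append_mem_perms_pk_dp_des:
  assumes "(s1, s2) \<in> ballot_pairs n k h d"
  shows "rev s1 @ s2 \<in> perms_pk_dp_des n k h d \<union> perms_pk_dp_des n k (int h - 1) (int d - 1)"
proof (cases "s1 = []")
  case True
  then show ?thesis
    using assms Nil_mem_ballot_pairs_iff ballot_pairs_fst_Nil_iff[OF assms] by simp
next
  case False
  have "ballot s1" "ballot s2"
    using assms by (simp_all add: ballot_pairs_def)
  then show ?thesis
    using mem_ballot_pairs_iff[OF False] assms by (cases "s2 \<noteq> [] \<and> hd s2 < hd s1") auto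
qed

lemma image_ballot_pairs_covers:
  assumes "p \<in> perms_pk_dp_des n k (int h) (int d)"
  shows "p \<in> (\<lambda>(s1, s2). rev s1 @ s2) ` ballot_pairs n k h d"
proof (cases "h = 0")
  case True
  then show ?thesis
    using assms Nil_mem_ballot_pairs_iff[of p n k h d] by force
next
  case False
  have steps_pm: "set (steps p) \<subseteq> {-1, 1}"
    using steps_distinct perms_pk_dp_des_distinct[OF assms] .
  have "min_prefix_sum (steps p) < 0"
    using assms False by (simp add: perms_pk_dp_des_def dp_eq_min_prefix_sum)
  then obtain u v where uv: "steps p = u @ (-1) # v" "min_prefix_sum u = sum_list u"
    "min_prefix_sum v = 0"
    using first_hit[OF steps_pm] by blast
  moreover have "p \<noteq> []"
    using uv(1) by auto
  ultimately obtain a b where ab: "p = a @ b" "a \<noteq> []" "steps a = u" "b \<noteq> []"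
    "(-1) # v = sgn (int (hd b) - int (last a)) # steps b"
    using steps_split[of p u "(-1) # v"] by (metis list.distinct(1))
  have "ballot (rev a)"
    using ab(3) uv(2) by (simp add: ballot_rev_iff)
  moreover have "ballot b" "hd b < hd (rev a)"
    using ab uv(3) by (auto simp: ballot_iff_min_prefix_sum hd_rev sgn_if split: if_splits)
  ultimately have "(rev a, b) \<in> ballot_pairs n k h d"
    using mem_ballot_pairs_iff[of "rev a" b n k h d] ab assms by simp
  then show ?thesis
    using ab(1) by force
qed

lemma image_ballot_pairs_covers_pred:
  assumes "p \<in> perms_pk_dp_des n k (int h - 1) (int d - 1)" "p \<noteq> []"
  shows "p \<in> (\<lambda>(s1, s2). rev s1 @ s2) ` ballot_pairs n k h d"
proof -
  have "set (steps p) \<subseteq> {-1, 1}"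
    using steps_distinct perms_pk_dp_des_distinct[OF assms(1)] .
  then obtain u w where uw: "steps p = u @ w" "min_prefix_sum u = sum_list u"
    "stays_above_start w"
    using last_hit by blast
  then obtain a b where ab: "p = a @ b" "a \<noteq> []" "steps a = u"
    "b \<noteq> [] \<Longrightarrow> w = sgn (int (hd b) - int (last a)) # steps b"
    using steps_split[OF uw(1) assms(2)] by metis
  have "ballot (rev a)"
    using ab(3) uw(2) by (simp add: ballot_rev_iff)
  moreover have "ballot b \<and> \<not> (b \<noteq> [] \<and> hd b < hd (rev a))"
  proof (cases "b = []")
    case False
    then show ?thesis
      using ab(2,4) uw(3)
      by (auto simp: ballot_iff_min_prefix_sum stays_above_start_def hd_rev sgn_if)
  qed (simp add: ballot_def)
  ultimately have "(rev a, b) \<in> ballot_pairs n k h d"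
    using ab assms by (auto simp: mem_ballot_pairs_iff)
  then show ?thesis
    using ab(1) by force
qed

lemma steps_of_ballot_pair:
  assumes "(s1, s2) \<in> ballot_pairs n k h d" "s1 \<noteq> []"
  obtains w where "steps (rev s1 @ s2) = steps (rev s1) @ w"
    and "min_prefix_sum (steps (rev s1)) = sum_list (steps (rev s1))"
    and "sum_list (steps (rev s1)) = 1 - int h"
    and "dp (rev s1 @ s2) = int h \<Longrightarrow> \<exists>v. w = (-1) # v"
    and "dp (rev s1 @ s2) \<noteq> int h \<Longrightarrow> stays_above_start w"
proof
  let ?desc_join = "s2 \<noteq> [] \<and> hd s2 < hd s1"
  let ?w = "if s2 = [] then [] else sgn (int (hd s2) - int (hd s1)) # steps s2"
  have pair: "distinct (s1 @ s2)" "ballot s1" "ballot s2"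
    using assms(1) by (simp_all add: ballot_pairs_def)
  show "steps (rev s1 @ s2) = steps (rev s1) @ ?w"
    using steps_rev_append[OF assms(2)] by (simp add: steps_rev)
  show "min_prefix_sum (steps (rev s1)) = sum_list (steps (rev s1))"
    using pair(2) ballot_rev_iff[of "rev s1"] by simp
  show "sum_list (steps (rev s1)) = 1 - int h"
    using ballot_pairs_hgt[OF assms] by (simp add: steps_rev sum_list_map_uminus hgt_eq_sum_steps)
  have "dp (rev s1 @ s2) = int h - 1 + of_bool ?desc_join"
    using mem_ballot_pairs_iff[OF assms(2) pair(2,3)] assms(1) by (simp add: perms_pk_dp_des_def)
  moreover have "s2 = [] \<or> hd s2 \<noteq> hd s1"
    using pair(1) assms(2) by (cases s1; cases s2) auto
  moreover have "min_prefix_sum (steps s2) = 0"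
    using pair(3) by (simp add: ballot_iff_min_prefix_sum)
  ultimately show "dp (rev s1 @ s2) = int h \<Longrightarrow> \<exists>v. ?w = (-1) # v"
    and "dp (rev s1 @ s2) \<noteq> int h \<Longrightarrow> stays_above_start ?w"
    by (auto simp: stays_above_start_def sgn_if)
qed

lemma inj_on_rev_append_ballot_pairs: "inj_on (\<lambda>(s1, s2). rev s1 @ s2) (ballot_pairs n k h d)"
proof (rule inj_onI, clarify)
  fix s1 s2 t1 t2
  assume s: "(s1, s2) \<in> ballot_pairs n k h d" and t: "(t1, t2) \<in> ballot_pairs n k h d"
    and eq: "rev s1 @ s2 = rev t1 @ t2"
  have "length s1 = length t1"
  proof (cases "h = 0")
    case True
    then show ?thesis
      using ballot_pairs_fst_Nil_iff[OF s] ballot_pairs_fst_Nil_iff[OF t] by simp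
  next
    case False
    then have ne: "s1 \<noteq> []" "t1 \<noteq> []"
      using ballot_pairs_fst_Nil_iff[OF s] ballot_pairs_fst_Nil_iff[OF t] by simp_all
    obtain w where ws: "steps (rev s1 @ s2) = steps (rev s1) @ w"
      "min_prefix_sum (steps (rev s1)) = sum_list (steps (rev s1))"
      "sum_list (steps (rev s1)) = 1 - int h"
      "dp (rev s1 @ s2) = int h \<Longrightarrow> \<exists>v. w = (-1) # v"
      "dp (rev s1 @ s2) \<noteq> int h \<Longrightarrow> stays_above_start w"
      using steps_of_ballot_pair[OF s ne(1)] by blast
    obtain w' where wt: "steps (rev t1 @ t2) = steps (rev t1) @ w'"
      "min_prefix_sum (steps (rev t1)) = sum_list (steps (rev t1))"
      "sum_list (steps (rev t1)) = 1 - int h"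
      "dp (rev t1 @ t2) = int h \<Longrightarrow> \<exists>v. w' = (-1) # v"
      "dp (rev t1 @ t2) \<noteq> int h \<Longrightarrow> stays_above_start w'"
      using steps_of_ballot_pair[OF t ne(2)] by blast
    have "steps (rev s1) = steps (rev t1)"
    proof (cases "dp (rev s1 @ s2) = int h")
      case True
      then obtain v v' where "w = (-1) # v" "w' = (-1) # v'"
        using ws(4) wt(4) eq by auto
      then show ?thesis
        using first_hit_unique[of "steps (rev s1)" v "steps (rev t1)" v'] ws wt eq by simp
    next
      case False
      then show ?thesis
        using last_hit_unique[of "steps (rev s1)" w "steps (rev t1)" w'] ws wt eq by simp
    qed
    then show ?thesis
      using ne length_steps[of "rev s1"] length_steps[of "rev t1"] by (cases s1; cases t1) auto
  qed
  then show "s1 = t1 \<and> s2 = t2"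
    using eq by (metis append_eq_append_conv length_rev rev_rev_ident)
qed

lemma card_ballot_pairs:
  assumes "(n, k, h, d) \<noteq> (0, 0, 1, 1)"
  shows "card (ballot_pairs n k h d)
    = p_pk_dp_des n k h d + p_pk_dp_des n k (int h - 1) (int d - 1)"
proof -
  let ?X = "perms_pk_dp_des n k h d" and ?Y = "perms_pk_dp_des n k (int h - 1) (int d - 1)"
  have "[] \<notin> ?Y"
    using assms by (auto simp: perms_pk_dp_des_def perms_def pk_short des_def dp_def)
  then have "(\<lambda>(s1, s2). rev s1 @ s2) ` ballot_pairs n k h d = ?X \<union> ?Y"
    using rev_append_mem_perms_pk_dp_des image_ballot_pairs_covers
      image_ballot_pairs_covers_pred by fastforce
  moreover have "finite ?X" "finite ?Y" "?X \<inter> ?Y = {}"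
    by (auto simp: perms_pk_dp_des_def perms_eq_permutations_of_set)
  ultimately show ?thesis
    using card_image[OF inj_on_rev_append_ballot_pairs] card_Un_disjoint
    by (metis p_pk_dp_des_def perms_pk_dp_des_def)
qed

section \<open>Counting ballot pairs\<close>

definition ballot_lists :: "nat set \<Rightarrow> nat \<Rightarrow> nat \<Rightarrow> nat list set" where
  "ballot_lists A k d = {xs \<in> permutations_of_set A. ballot xs \<and> pk xs = k \<and> des xs = d}"

lemma b_pk_des_eq_card_ballot_lists: "b_pk_des m (int k) (int d) = card (ballot_lists {1..m} k d)"
  unfolding b_pk_des_def ballot_perms_def ballot_lists_def perms_eq_permutations_of_set
  by (rule arg_cong[where f = card]) auto

lemma b_pk_des_neg: "k < 0 \<or> d < 0 \<Longrightarrow> b_pk_des m k d = 0"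
  unfolding b_pk_des_def by (rule card_eq_0_iff[THEN iffD2]) auto

lemma strict_mono_enumeration:
  assumes "finite A"
  obtains f :: "nat \<Rightarrow> nat" where "strict_mono_on {1..card A} f" "f ` {1..card A} = A"
proof
  let ?L = "sorted_list_of_set A"
  have L: "sorted_wrt (<) ?L" "length ?L = card A" "set ?L = A"
    using assms by (simp_all add: strict_sorted_list_of_set)
  show "strict_mono_on {1..card A} (\<lambda>i. ?L ! (i - 1))"
  proof (rule strict_mono_onI)
    fix r s
    assume "r \<in> {1..card A}" "s \<in> {1..card A}" "r < s"
    then show "?L ! (r - 1) < ?L ! (s - 1)"
      using sorted_wrt_nth_less[OF L(1), of "r - 1" "s - 1"] L(2) by auto
  qed
  have "(\<lambda>i. ?L ! (i - 1)) ` {1..card A} = (\<lambda>i. ?L ! (i - 1)) ` Suc ` {..<length ?L}"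
    by (simp only: L(2) image_Suc_lessThan)
  also have "\<dots> = (!) ?L ` {..<length ?L}"
    by (simp add: image_image)
  also have "\<dots> = set ?L"
    by (rule bij_betw_imp_surj_on[OF bij_betw_nth]) simp_all
  also have "\<dots> = A"
    by (fact L(3))
  finally show "(\<lambda>i. ?L ! (i - 1)) ` {1..card A} = A" .
qed

lemma card_ballot_lists_relabel:
  assumes "finite A"
  shows "card (ballot_lists A k d) = card (ballot_lists {1..card A} k d)"
proof -
  obtain f where f: "strict_mono_on {1..card A} f" "f ` {1..card A} = A"
    using strict_mono_enumeration[OF assms] .
  have inj: "inj_on f {1..card A}"
    using f(1) by (rule strict_mono_on_imp_inj_on)
  have stats: "ballot (map f xs) = ballot xs \<and> pk (map f xs) = pk xs \<and> des (map f xs) = des xs"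
    if "xs \<in> permutations_of_set {1..card A}" for xs
    using steps_map_strict_mono[OF f(1)] that
    by (simp add: ballot_iff_min_prefix_sum pk_eq_peaks_steps des_eq_count_steps
        permutations_of_set_def)
  have "ballot_lists A k d = map f ` ballot_lists {1..card A} k d"
    using permutations_of_set_image_inj[OF inj] stats
    unfolding ballot_lists_def f(2) by (auto simp: image_iff)
  moreover have "inj_on (map f) (ballot_lists {1..card A} k d)"
    using inj by (intro inj_on_mapI) (auto simp: ballot_lists_def permutations_of_set_def)
  ultimately show ?thesis
    by (simp add: card_image)
qed

lemma ballot_pairs_fiber_eq:
  assumes "j \<le> k" "i + h \<le> d"
  shows "{(s1, s2) \<in> ballot_pairs n k h d. des s1 = i \<and> pk s1 = j}
    = (\<Union>A \<in> {A. A \<subseteq> {1..n} \<and> card A = 2 * i + h}.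
        ballot_lists A j i \<times> ballot_lists ({1..n} - A) (k - j) (d - i - h))"
proof (intro set_eqI iffI)
  fix p
  assume "p \<in> {(s1, s2) \<in> ballot_pairs n k h d. des s1 = i \<and> pk s1 = j}"
  then obtain s1 s2 where p: "p = (s1, s2)" "(s1, s2) \<in> ballot_pairs n k h d"
    "des s1 = i" "pk s1 = j"
    by auto
  then have "set s1 \<subseteq> {1..n}" "card (set s1) = 2 * i + h" "set s2 = {1..n} - set s1"
    by (auto simp: ballot_pairs_def distinct_card)
  with p show "p \<in> (\<Union>A \<in> {A. A \<subseteq> {1..n} \<and> card A = 2 * i + h}.
      ballot_lists A j i \<times> ballot_lists ({1..n} - A) (k - j) (d - i - h))"
    by (auto simp: ballot_pairs_def ballot_lists_def permutations_of_set_def)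
next
  fix p
  assume "p \<in> (\<Union>A \<in> {A. A \<subseteq> {1..n} \<and> card A = 2 * i + h}.
      ballot_lists A j i \<times> ballot_lists ({1..n} - A) (k - j) (d - i - h))"
  then obtain A s1 s2 where "p = (s1, s2)" "A \<subseteq> {1..n}" "card A = 2 * i + h"
    "s1 \<in> ballot_lists A j i" "s2 \<in> ballot_lists ({1..n} - A) (k - j) (d - i - h)"
    by auto
  with assms show "p \<in> {(s1, s2) \<in> ballot_pairs n k h d. des s1 = i \<and> pk s1 = j}"
    by (auto simp: ballot_pairs_def ballot_lists_def permutations_of_set_def distinct_card)
qed

lemma card_ballot_pairs_fiber:
  assumes "j \<le> k" "i + h \<le> d"
  shows "card {(s1, s2) \<in> ballot_pairs n k h d. des s1 = i \<and> pk s1 = j}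
    = (n choose (2 * i + h)) * card (ballot_lists {1..2 * i + h} j i)
      * card (ballot_lists {1..n - (2 * i + h)} (k - j) (d - i - h))"
proof -
  let ?S = "{A. A \<subseteq> {1..n} \<and> card A = 2 * i + h}"
  let ?F = "\<lambda>A. ballot_lists A j i \<times> ballot_lists ({1..n} - A) (k - j) (d - i - h)"
  have finite_lists: "finite (ballot_lists A k' d')" for A k' d'
    by (rule finite_subset[OF _ finite_permutations_of_set]) (auto simp: ballot_lists_def)
  have "card (\<Union>A \<in> ?S. ?F A) = (\<Sum>A \<in> ?S. card (?F A))"
    by (rule card_UN_disjoint)
      (auto simp: finite_lists, auto simp: ballot_lists_def permutations_of_set_def)
  also have "\<dots> = (\<Sum>A \<in> ?S. card (ballot_lists {1..2 * i + h} j i)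
      * card (ballot_lists {1..n - (2 * i + h)} (k - j) (d - i - h)))"
  proof (rule sum.cong[OF refl])
    fix A
    assume "A \<in> ?S"
    moreover from this have "finite A"
      using finite_subset by blast
    ultimately show "card (?F A) = card (ballot_lists {1..2 * i + h} j i)
      * card (ballot_lists {1..n - (2 * i + h)} (k - j) (d - i - h))"
      using card_ballot_lists_relabel[of A] card_ballot_lists_relabel[of "{1..n} - A"]
      by (simp add: card_cartesian_product card_Diff_subset)
  qed
  also have "\<dots> = (n choose (2 * i + h)) * card (ballot_lists {1..2 * i + h} j i)
      * card (ballot_lists {1..n - (2 * i + h)} (k - j) (d - i - h))"
    using n_subsets[of "{1..n}" "2 * i + h"] by simp
  finally show ?thesis
    unfolding ballot_pairs_fiber_eq[OF assms] .
qed

lemma finite_ballot_pairs: "finite (ballot_pairs n k h d)"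
proof (rule finite_imageD[OF _ inj_on_rev_append_ballot_pairs])
  show "finite ((\<lambda>(s1, s2). rev s1 @ s2) ` ballot_pairs n k h d)"
    by (rule finite_subset[OF _ finite_perms]) (auto simp: ballot_pairs_def perms_def)
qed

lemma card_ballot_pairs_eq_sum_fibers:
  "card (ballot_pairs n k h d)
    = (\<Sum>i=0..n. \<Sum>j=0..k. card {(s1, s2) \<in> ballot_pairs n k h d. des s1 = i \<and> pk s1 = j})"
proof -
  let ?P = "ballot_pairs n k h d" and ?g = "\<lambda>(s1, s2). (des s1, pk s1)"
  have "?g (s1, s2) \<in> {0..n} \<times> {0..k}" if "(s1, s2) \<in> ?P" for s1 s2
  proof -
    have "des s1 \<le> length s1" "length s1 \<le> n" "pk s1 \<le> k"
      using that distinct_card[of s1] card_mono[of "{1..n}" "set s1"]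
      by (auto simp: ballot_pairs_def)
    then show ?thesis
      by simp
  qed
  then have g_range: "?g ` ?P \<subseteq> {0..n} \<times> {0..k}"
    by auto
  have "card ?P = (\<Sum>ij \<in> {0..n} \<times> {0..k}. card {p \<in> ?P. ?g p = ij})"
    using sum.group[OF finite_ballot_pairs _ g_range, where h = "\<lambda>_. 1 :: nat"] by simp
  then show ?thesis
    by (simp add: sum.cartesian_product case_prod_beta' prod_eq_iff)
qed

lemma card_ballot_pairs_fiber_int:
  "int (card {(s1, s2) \<in> ballot_pairs n k h d. des s1 = i \<and> pk s1 = j})
    = int (binom_int (int n) (2 * int i + int h))
      * int (b_pk_des (nat (2 * int i + int h)) (int j) (int i))
      * int (b_pk_des (nat (int n - 2 * int i - int h)) (int k - int j) (int d - int i - int h))"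
proof (cases "j \<le> k \<and> i + h \<le> d")
  case True
  let ?m = "2 * i + h"
  have m: "2 * int i + int h = int ?m"
    by simp
  have "binom_int (int n) (2 * int i + int h) = n choose ?m"
    unfolding m binom_int_def nat_int by auto
  moreover have "b_pk_des (nat (2 * int i + int h)) (int j) (int i)
      = card (ballot_lists {1..?m} j i)"
    unfolding m nat_int by (rule b_pk_des_eq_card_ballot_lists)
  moreover have "b_pk_des (nat (int n - 2 * int i - int h)) (int k - int j) (int d - int i - int h)
      = card (ballot_lists {1..n - ?m} (k - j) (d - i - h))" if "?m \<le> n"
  proof -
    have "nat (int n - 2 * int i - int h) = n - ?m" "int k - int j = int (k - j)"
      "int d - int i - int h = int (d - i - h)"
      using that True by auto
    then show ?thesis
      by (simp only: b_pk_des_eq_card_ballot_lists)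
  qed
  ultimately show ?thesis
    using card_ballot_pairs_fiber[of j k i h d n] True by (cases "?m \<le> n") simp_all
next
  case False
  then have fiber_empty: "{(s1, s2) \<in> ballot_pairs n k h d. des s1 = i \<and> pk s1 = j} = {}"
    by (auto simp: ballot_pairs_def)
  have "int k - int j < 0 \<or> int d - int i - int h < 0"
    using False by auto
  then show ?thesis
    unfolding fiber_empty by (simp add: b_pk_des_neg)
qed

lemma sum_atLeastAtMost_int_nat: "(\<Sum>i\<in>{0..int n}. f i) = (\<Sum>i=0..n. f (int i))"
proof -
  have "{0..int n} = int ` {0..n}"
    by (simp add: image_int_atLeastAtMost)
  then show ?thesis
    by (simp add: sum.reindex)
qed

theorem theorem3p6:
  fixes n k h d :: nat
  assumes "(n, k, h, d) \<noteq> (0, 0, 1, 1)"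
  shows "int (p_pk_dp_des n (int k) (int h) (int d))
           + int (p_pk_dp_des n (int k) (int h - 1) (int d - 1))
         = (\<Sum>i\<in>{0..int n}. \<Sum>j\<in>{0..int k}.
              int (binom_int (int n) (2 * i + int h))
              * int (b_pk_des (nat (2 * i + int h)) j i)
              * int (b_pk_des (nat (int n - 2 * i - int h)) (int k - j) (int d - i - int h)))"
proof -
  have "int (p_pk_dp_des n (int k) (int h) (int d))
      + int (p_pk_dp_des n (int k) (int h - 1) (int d - 1))
      = int (card (ballot_pairs n k h d))"
    using card_ballot_pairs[OF assms] by simp
  also have "\<dots> = (\<Sum>i=0..n. \<Sum>j=0..k.
      int (card {(s1, s2) \<in> ballot_pairs n k h d. des s1 = i \<and> pk s1 = j}))"
    by (simp add: card_ballot_pairs_eq_sum_fibers)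
  also have "\<dots> = (\<Sum>i\<in>{0..int n}. \<Sum>j\<in>{0..int k}.
              int (binom_int (int n) (2 * i + int h))
              * int (b_pk_des (nat (2 * i + int h)) j i)
              * int (b_pk_des (nat (int n - 2 * i - int h)) (int k - j) (int d - i - int h)))"
    by (simp only: sum_atLeastAtMost_int_nat card_ballot_pairs_fiber_int)
  finally show ?thesis .
qed

end
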